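(* Fix $2\le d\le7$, let $(a,b,c)$ be given by: $d=2$: $(0.5,0.7,0.27)$; $d=3$: $(0.4,0.6,0.2)$; $d=4$: $(0.3,0.5,0.1)$; $d=5$: $(0.3,0.4,0.1)$; $d=6$: $(0.27,0.32,0.1)$; $d=7$: $(0.26,0.27,0.01)$, and let $x\in\mathcal{S}_{a,b,c}$. Then for every $n\ge2$ (partial derivatives evaluated at $x$): $\left|\frac{\partial\psi_n}{\partial x_{n-1}}\right|\le\frac{4d(d-1)^{d-1}(1+c+c^2)^d}{(d+1)^{d+1}(1+c)^{d-1}}$ for $d=2$; $\left|\frac{\partial\psi_n}{\partial x_{n-1}}\right|\le\frac{db^{d-1}(1+c+c^2)^d}{(1+b)(1+b+bc)^{d}}$ for $3\le d\le7$; $\left|\frac{\partial\psi_n}{\partial x_{n}}\right|\le\left|\frac{\partial\psi_n}{\partial x_{n-1}}\right|\cdot b(1+c+bc)$; $\left|\frac{\partial\psi_n}{\partial x_{n+1}}\right|\le\frac{db^dc(1+c+c^2)^{d-1}}{(1+b+bc)^d}$.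
   Context: For $n\ge2$, $\psi_n(x)=x_{n-1}^d\big(\frac{1+x_n+x_nx_{n+1}}{1+x_{n-1}+x_{n-1}x_n}\big)^d$. $\mathcal{R}$ is the set of sequences $(x_i)_{i\ge1}$ with $x_i=z_i/z_{i-1}$ ($x_i=0$ if $z_{i-1}=0$) for $z$ a symmetric probability distribution on $\mathbb{Z}$ whose support is an interval or all of $\mathbb{Z}$, and $\mathcal{S}_{a,b,c}:=\{x\in\mathcal{R}: a\le x_1\le b,\ 0\le x_n\le c\ \forall n\ge2\}$. *)

theory Defs
  imports "HOL-Analysis.Analysis"
begin

text \<open>psi_n as a function of (x_{n-1}, x_n, x_{n+1}).\<close>
definition psi :: "nat \<Rightarrow> real \<Rightarrow> real \<Rightarrow> real \<Rightarrow> real" where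
  "psi d u v w = u ^ d * ((1 + v + v * w) / (1 + u + u * v)) ^ d"

definition sym_prob_interval :: "(int \<Rightarrow> real) \<Rightarrow> bool" where
  "sym_prob_interval z \<longleftrightarrow>
     (\<forall>i. z i \<ge> 0) \<and> (\<forall>i. z (-i) = z i) \<and> (z has_sum 1) UNIV \<and>
     (\<forall>i j k. i \<le> j \<and> j \<le> k \<and> z i \<noteq> 0 \<and> z k \<noteq> 0 \<longrightarrow> z j \<noteq> 0)"

text \<open>The set R; sequences are indexed from 1 (the value at 0 is irrelevant).\<close>
definition RR :: "(nat \<Rightarrow> real) set" where
  "RR = {x. \<exists>z. sym_prob_interval z \<and>
        (\<forall>i\<ge>1. x i = (if z (int i - 1) = 0 then 0 else z (int i) / z (int i - 1)))}"

definition SS :: "real \<Rightarrow> real \<Rightarrow> real \<Rightarrow> (nat \<Rightarrow> real) set" where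
  "SS a b c = {x \<in> RR. a \<le> x 1 \<and> x 1 \<le> b \<and> (\<forall>n\<ge>2. 0 \<le> x n \<and> x n \<le> c)}"

definition params :: "nat \<Rightarrow> real \<times> real \<times> real" where
  "params d = (if d = 2 then (0.5, 0.7, 0.27)
     else if d = 3 then (0.4, 0.6, 0.2)
     else if d = 4 then (0.3, 0.5, 0.1)
     else if d = 5 then (0.3, 0.4, 0.1)
     else if d = 6 then (0.27, 0.32, 0.1)
     else (0.26, 0.27, 0.01))"

end

theory Submission
  imports Defs
begin

text \<open>Write N = 1 + v + v w, D = 1 + u + u v and q = u N / D, so that psi = q^d and each
  partial derivative is d q^(d-1) times N / D^2, u (1 + w + u w) / D^2 and u v / D respectively.
  Hence the x_n-derivative is the x_{n-1}-derivative times u (1 + w + u w) / N, at most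
  b (1 + c + b c); and q and u v / D are increasing over the box, which bounds the
  x_{n+1}-derivative by its value at (b, c, c).

  For the x_{n-1}-derivative put k = 1 + v and s = k u: it equals
  d s^(d-1) / (1 + s)^(d+1) (N / k)^(d-1) N, and weighted AM-GM bounds the first factor by
  4 (d-1)^(d-1) / (d+1)^(d+1) uniformly in u; this is the d = 2 bound.  For d >= 3 one bounds
  N / D by its value at v = w = c instead, leaving t^(d-1) / ((1 + t) (1 + (1 + c) t)^d) at t = u,
  which increases on [0, b] as soon as a concave quadratic is nonnegative at b; that is checked
  for the tabulated parameters.\<close>

lemma weighted_AM_GM_two:
  fixes x y :: real and m n :: nat
  assumes "0 < x" "0 < y" "0 < m + n"
  shows "x ^ m * y ^ n \<le> ((m * x + n * y) / (m + n)) ^ (m + n)"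
proof -
  define G where "G = (m * x + n * y) / (m + n)"
  have G: "0 < G"
    using assms by (auto simp: G_def add_pos_nonneg add_nonneg_pos)
  have "m * ln (x / G) + n * ln (y / G) \<le> m * (x / G - 1) + n * (y / G - 1)"
    using assms G by (intro add_mono mult_left_mono ln_le_minus_one) auto
  also have "\<dots> = 0"
    using G assms by (simp add: G_def field_simps)
  finally have "ln ((x / G) ^ m * (y / G) ^ n) \<le> 0"
    using assms G by (simp add: ln_mult ln_realpow)
  then have "(x / G) ^ m * (y / G) ^ n \<le> 1"
    using assms G by (simp add: ln_le_zero_iff)
  moreover have "(x / G) ^ m * (y / G) ^ n = x ^ m * y ^ n / G ^ (m + n)"
    by (simp add: power_divide power_add)
  ultimately have "x ^ m * y ^ n \<le> G ^ (m + n)"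
    using G by (simp add: pos_divide_le_eq)
  then show ?thesis
    by (simp only: G_def)
qed

lemma power_div_one_plus_power_le:
  fixes s :: real
  assumes "2 \<le> d" "0 \<le> s"
  shows "s ^ (d - 1) / (1 + s) ^ (d + 1) \<le> 4 * real (d - 1) ^ (d - 1) / real (d + 1) ^ (d + 1)"
proof (cases "s = 0")
  case True
  have "0 \<le> 4 * real (d - 1) ^ (d - 1) / real (d + 1) ^ (d + 1)"
    by simp
  then show ?thesis
    using True assms by (simp add: power_0_left)
next
  case False
  define K where "K = 4 * real (d - 1) ^ (d - 1) / real (d + 1) ^ (d + 1)"
  have d1: "0 < real (d - 1)" and dd: "d - 1 + 2 = d + 1"
    using assms by auto
  have "(s / real (d - 1)) ^ (d - 1) * (1 / 2) ^ 2 \<le> ((1 + s) / real (d + 1)) ^ (d + 1)"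
    using weighted_AM_GM_two[of "s / real (d - 1)" "1 / 2" "d - 1" 2] False assms d1
    by (simp add: dd add.commute)
  then have "s ^ (d - 1) \<le> K * (1 + s) ^ (d + 1)"
    using d1 by (simp add: K_def power_divide field_simps)
  then show ?thesis
    unfolding K_def[symmetric] using assms by (subst pos_divide_le_eq) simp_all
qed

lemma power_ratio_has_derivative:
  fixes k x :: real
  assumes "0 \<le> k" "0 \<le> x"
  shows "((\<lambda>x. x ^ Suc j / ((1 + x) * (1 + k * x) ^ Suc (Suc j))) has_real_derivative
      x ^ j * (1 + k * x) ^ Suc j * (real j + 1 + (real j - k) * x - 2 * k * x^2)
        / ((1 + x) * (1 + k * x) ^ Suc (Suc j))^2) (at x)"
proof -
  have pos: "0 < 1 + k * x"
    using assms by (simp add: add_pos_nonneg)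
  have num: "real (Suc j) * x ^ j * ((1 + x) * (1 + k * x) ^ Suc (Suc j))
      - x ^ Suc j * ((1 + k * x) ^ Suc (Suc j) + real (Suc (Suc j)) * k * (1 + k * x) ^ Suc j * (1 + x))
      = x ^ j * (1 + k * x) ^ Suc j * (real j + 1 + (real j - k) * x - 2 * k * x^2)"
    by (simp add: power_Suc power2_eq_square algebra_simps)
  have nz: "(1 + x) * (1 + k * x) ^ Suc (Suc j) \<noteq> 0"
    using pos assms by simp
  have denom: "((\<lambda>x. (1 + x) * (1 + k * x) ^ Suc (Suc j)) has_real_derivative
      (1 + k * x) ^ Suc (Suc j) + real (Suc (Suc j)) * k * (1 + k * x) ^ Suc j * (1 + x)) (at x)"
    by (rule derivative_eq_intros refl | simp)+
  have "((\<lambda>x. x ^ Suc j / ((1 + x) * (1 + k * x) ^ Suc (Suc j))) has_real_derivative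
      (real (Suc j) * x ^ j * ((1 + x) * (1 + k * x) ^ Suc (Suc j))
      - x ^ Suc j * ((1 + k * x) ^ Suc (Suc j) + real (Suc (Suc j)) * k * (1 + k * x) ^ Suc j * (1 + x)))
      / (((1 + x) * (1 + k * x) ^ Suc (Suc j)) * ((1 + x) * (1 + k * x) ^ Suc (Suc j)))) (at x)"
    using DERIV_divide[OF DERIV_pow[of "Suc j"] denom nz] by (simp only: diff_Suc_Suc diff_zero)
  then show ?thesis
    by (simp only: num power2_eq_square)
qed

lemma power_ratio_mono:
  fixes k t b :: real
  assumes "2 \<le> d" "0 \<le> k" "0 \<le> t" "t \<le> b"
    and "0 \<le> real d - 1 + (real d - 2 - k) * b - 2 * k * b^2"
  shows "t ^ (d - 1) / ((1 + t) * (1 + k * t) ^ d) \<le> b ^ (d - 1) / ((1 + b) * (1 + k * b) ^ d)"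
proof -
  txt \<open>Up to the factor x^(d-2) (1 + k x)^(d-1), P is the numerator of the derivative; being
    concave with P 0 \<ge> 0, it is nonnegative on [0, b] once it is at b.\<close>
  define P where "P x = real d - 1 + (real d - 2 - k) * x - 2 * k * x^2" for x
  have P_nonneg: "0 \<le> P x" if "0 \<le> x" "x \<le> b" for x
  proof (cases "b = 0")
    case True
    then show ?thesis
      using that assms by (simp add: P_def)
  next
    case False
    have "b * P x = x * P b + (b - x) * (real d - 1) + 2 * k * x * b * (b - x)"
      by (simp add: P_def algebra_simps power2_eq_square)
    also have "\<dots> \<ge> 0"
      using that assms by (simp add: P_def)
    finally show ?thesis
      using False that by (simp add: zero_le_mult_iff)
  qed
  obtain j where j: "d = Suc (Suc j)"
    using assms(1) by (metis add_2_eq_Suc le_Suc_ex)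
  have P_j: "P x = real j + 1 + (real j - k) * x - 2 * k * x^2" for x
    by (simp add: P_def j)
  have ratio_deriv: "((\<lambda>x. x ^ Suc j / ((1 + x) * (1 + k * x) ^ Suc (Suc j))) has_real_derivative
      x ^ j * (1 + k * x) ^ Suc j * P x / ((1 + x) * (1 + k * x) ^ Suc (Suc j))^2) (at x)"
    if "x \<in> {t..b}" for x
    unfolding P_j using that assms by (intro power_ratio_has_derivative) auto
  have ratio_deriv_nonneg: "0 \<le> x ^ j * (1 + k * x) ^ Suc j * P x / ((1 + x) * (1 + k * x) ^ Suc (Suc j))^2"
    if "x \<in> {t..b}" for x
    using that assms P_nonneg by simp
  show ?thesis
    using deriv_nonneg_imp_mono[OF ratio_deriv ratio_deriv_nonneg assms(4)] by (simp add: j)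
qed

definition psi_root :: "real \<Rightarrow> real \<Rightarrow> real \<Rightarrow> real" where
  "psi_root u v w = u * (1 + v + v * w) / (1 + u + u * v)"

lemma psi_eq_power: "psi d u v w = psi_root u v w ^ d"
  unfolding psi_def psi_root_def by (simp add: power_mult_distrib[symmetric])

lemma psi_denominator_pos: "0 \<le> u \<Longrightarrow> 0 \<le> v \<Longrightarrow> 0 < 1 + u + (u :: real) * v"
  by (simp add: add_pos_nonneg)

lemma psi_root_nonneg: "0 \<le> u \<Longrightarrow> 0 \<le> v \<Longrightarrow> 0 \<le> w \<Longrightarrow> 0 \<le> psi_root u v w"
  unfolding psi_root_def by simp

lemma psi_root_le:
  fixes u v w b c :: real
  assumes "0 \<le> u" "u \<le> b" "0 \<le> v" "v \<le> c" "0 \<le> w" "w \<le> c"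
  shows "psi_root u v w \<le> b * (1 + c + c^2) / (1 + b + b * c)"
proof -
  have D: "0 < 1 + u + u * v" and F: "0 < 1 + b + b * v" and E: "0 < 1 + b + b * c"
    using assms by (simp_all add: add_pos_nonneg)
  have "psi_root u v w \<le> u * (1 + v + v * c) / (1 + u + u * v)"
    unfolding psi_root_def using assms D
    by (intro divide_right_mono mult_left_mono) (auto intro: mult_left_mono)
  also have "\<dots> = (1 + v + v * c) * (u / (1 + u + u * v))"
    by simp
  also have "\<dots> \<le> (1 + v + v * c) * (b / (1 + b + b * v))"
  proof -
    have "u * (1 + b + b * v) \<le> b * (1 + u + u * v)"
      using assms by (simp add: algebra_simps)
    then have "u / (1 + u + u * v) \<le> b / (1 + b + b * v)"
      using D F by (simp add: field_simps)
    then show ?thesis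
      using assms by (intro mult_left_mono) auto
  qed
  also have "\<dots> = b * ((1 + v + v * c) / (1 + b + b * v))"
    by simp
  also have "\<dots> \<le> b * ((1 + c + c^2) / (1 + b + b * c))"
  proof -
    have "(1 + c + c^2) * (1 + b + b * v) - (1 + v + v * c) * (1 + b + b * c) = (c - v) * (1 + c + c * b)"
      by (simp add: algebra_simps power2_eq_square)
    also have "\<dots> \<ge> 0"
      using assms by simp
    finally have "(1 + v + v * c) / (1 + b + b * v) \<le> (1 + c + c^2) / (1 + b + b * c)"
      using E F by (simp add: field_simps)
    then show ?thesis
      using assms by (intro mult_left_mono) auto
  qed
  finally show ?thesis
    by simp
qed

lemma psi_numerator_ratio_le:
  fixes v w c :: real
  assumes "0 \<le> v" "v \<le> c" "0 \<le> w" "w \<le> c"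
  shows "(1 + v + v * w) / (1 + v) \<le> (1 + c + c^2) / (1 + c)"
proof -
  have "v * w \<le> c * c" "v * w * c \<le> v * c * c"
    using assms by (auto intro: mult_mono mult_right_mono mult_left_mono)
  then have "(1 + v + v * w) * (1 + c) \<le> (1 + c + c^2) * (1 + v)"
    by (simp add: algebra_simps power2_eq_square)
  then show ?thesis
    using assms by (simp add: field_simps)
qed

lemma psi_ratio_le:
  fixes u v w c :: real
  assumes "0 \<le> u" "0 \<le> v" "v \<le> c" "0 \<le> w" "w \<le> c"
  shows "(1 + v + v * w) / (1 + u + u * v) \<le> (1 + c + c^2) / (1 + (1 + c) * u)"
proof -
  have "(1 + v + v * w) * (1 + (1 + c) * u) \<le> (1 + v + v * c) * (1 + (1 + c) * u)"
    using assms by (intro mult_right_mono) (auto intro: mult_left_mono)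
  also have "\<dots> \<le> (1 + c + c^2) * (1 + u + u * v)"
  proof -
    have "(1 + c + c^2) * (1 + u + u * v) - (1 + v + v * c) * (1 + (1 + c) * u)
        = (c - v) * (1 + c + c * u)"
      by (simp add: algebra_simps power2_eq_square)
    also have "\<dots> \<ge> 0"
      using assms by simp
    finally show ?thesis
      by simp
  qed
  finally show ?thesis
    using assms psi_denominator_pos[of u v] by (simp add: field_simps add_pos_nonneg)
qed

lemma deriv_psi_fst:
  assumes "1 + u + u * v \<noteq> 0"
  shows "deriv (\<lambda>t. psi d t v w) u
    = d * psi_root u v w ^ (d - 1) * (1 + v + v * w) / (1 + u + u * v)^2"
proof -
  have "(1 + v + v * w) * (1 + u + u * v) - u * (1 + v + v * w) * (1 + v) = 1 + v + v * w"
    by (simp add: algebra_simps)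
  then show ?thesis
    unfolding psi_eq_power psi_root_def
    by (intro DERIV_imp_deriv derivative_eq_intros refl) (use assms in \<open>auto simp: power2_eq_square\<close>)
qed

lemma deriv_psi_snd:
  assumes "1 + u + u * v \<noteq> 0"
  shows "deriv (\<lambda>t. psi d u t w) v
    = d * psi_root u v w ^ (d - 1) * u * (1 + w + u * w) / (1 + u + u * v)^2"
proof -
  have "(1 + w) * (1 + u + u * v) - (1 + v + v * w) * u = 1 + w + u * w"
    by (simp add: algebra_simps)
  then show ?thesis
    unfolding psi_eq_power psi_root_def
    by (intro DERIV_imp_deriv derivative_eq_intros refl)
      (use assms in \<open>auto simp: power2_eq_square algebra_simps\<close>)
qed

lemma deriv_psi_thd:
  assumes "1 + u + u * v \<noteq> 0"
  shows "deriv (\<lambda>t. psi d u v t) w = d * psi_root u v w ^ (d - 1) * u * v / (1 + u + u * v)"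
proof -
  have "v * u * (1 + u + u * v) / ((1 + u + u * v) * (1 + u + u * v)) = u * v / (1 + u + u * v)"
    using assms by simp
  then show ?thesis
    unfolding psi_eq_power psi_root_def
    by (intro DERIV_imp_deriv derivative_eq_intros refl) (use assms in auto)
qed

lemma abs_deriv_psi_fst_le_uniform:
  fixes d :: nat and u v w c :: real
  assumes "2 \<le> d" "0 \<le> u" "0 \<le> v" "v \<le> c" "0 \<le> w" "w \<le> c"
  shows "\<bar>deriv (\<lambda>t. psi d t v w) u\<bar>
    \<le> 4 * d * (d - 1) ^ (d - 1) * (1 + c + c^2) ^ d / ((d + 1) ^ (d + 1) * (1 + c) ^ (d - 1))"
proof -
  define k where "k = 1 + v"
  define N where "N = 1 + v + v * w"
  define C where "C = 1 + c + c^2"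
  have k: "1 \<le> k" and N: "1 \<le> N" and c: "0 \<le> c"
    using assms by (simp_all add: k_def N_def)
  have "N \<le> C"
    using assms mult_mono[of v c w c] by (simp add: N_def C_def power2_eq_square)
  have "N / k \<le> C / (1 + c)"
    unfolding N_def k_def C_def using assms(3-6) by (rule psi_numerator_ratio_le)
  have identity: "d * (s * r / (1 + s)) ^ (d - 1) * N / (1 + s)^2
      = d * (s ^ (d - 1) / (1 + s) ^ (d + 1)) * (r ^ (d - 1) * N)" if "0 \<le> s" for s r
    using that assms by (cases d) (simp_all add: power_divide power_mult_distrib power2_eq_square field_simps)
  have kD: "1 + u + u * v = 1 + k * u"
    by (simp add: k_def algebra_simps)
  have root: "psi_root u v w = (k * u) * (N / k) / (1 + k * u)"
    using k unfolding psi_root_def kD[symmetric] by (simp add: N_def)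
  have Dnz: "1 + u + u * v \<noteq> 0"
    using psi_denominator_pos[of u v] assms by simp
  have "deriv (\<lambda>t. psi d t v w) u = d * psi_root u v w ^ (d - 1) * N / (1 + u + u * v)^2"
    by (simp add: deriv_psi_fst[OF Dnz] N_def)
  also have "\<dots> = d * ((k * u) ^ (d - 1) / (1 + k * u) ^ (d + 1)) * ((N / k) ^ (d - 1) * N)"
    unfolding root kD using k assms by (intro identity) simp
  also have "\<dots> \<le> d * (4 * real (d - 1) ^ (d - 1) / real (d + 1) ^ (d + 1)) * ((C / (1 + c)) ^ (d - 1) * C)"
    using assms k N \<open>N \<le> C\<close> \<open>N / k \<le> C / (1 + c)\<close>
    by (intro mult_mono mult_left_mono power_mono power_div_one_plus_power_le) auto
  also have "\<dots> = 4 * d * (d - 1) ^ (d - 1) * C ^ d / ((d + 1) ^ (d + 1) * (1 + c) ^ (d - 1))"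
  proof -
    obtain m where "d = Suc m"
      using assms by (cases d) auto
    then show ?thesis
      using c by (simp only: diff_Suc_1 of_nat_mult of_nat_power power_divide power_Suc) (simp add: mult_ac)
  qed
  finally have "deriv (\<lambda>t. psi d t v w) u
      \<le> 4 * d * (d - 1) ^ (d - 1) * C ^ d / ((d + 1) ^ (d + 1) * (1 + c) ^ (d - 1))" .
  moreover have "0 \<le> deriv (\<lambda>t. psi d t v w) u"
    using assms by (simp add: deriv_psi_fst[OF Dnz] psi_root_nonneg)
  ultimately show ?thesis
    unfolding C_def by (simp only: abs_of_nonneg)
qed

lemma abs_deriv_psi_fst_le_monotone:
  fixes d :: nat and u v w b c :: real
  assumes "2 \<le> d" "0 \<le> u" "u \<le> b" "0 \<le> v" "v \<le> c" "0 \<le> w" "w \<le> c"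
    and "0 \<le> real d - 1 + (real d - 2 - (1 + c)) * b - 2 * (1 + c) * b^2"
  shows "\<bar>deriv (\<lambda>t. psi d t v w) u\<bar>
    \<le> d * b ^ (d - 1) * (1 + c + c^2) ^ d / ((1 + b) * (1 + b + b * c) ^ d)"
proof -
  define N where "N = 1 + v + v * w"
  define D where "D = 1 + u + u * v"
  define C where "C = 1 + c + c^2"
  have N: "1 \<le> N" and D: "1 + u \<le> D" and c: "0 \<le> c" and C: "0 < C"
    using assms by (simp_all add: N_def D_def C_def add_pos_nonneg)
  have ND: "N / D \<le> C / (1 + (1 + c) * u)"
    unfolding N_def D_def C_def using assms by (intro psi_ratio_le) auto
  have Dnz: "1 + u + u * v \<noteq> 0"
    using psi_denominator_pos[of u v] assms by simp
  have "deriv (\<lambda>t. psi d t v w) u = d * (u * N / D) ^ (d - 1) * N / D^2"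
    by (simp add: deriv_psi_fst[OF Dnz] psi_root_def N_def D_def)
  also have "\<dots> = d * (N / D) ^ d * (u ^ (d - 1) / D)"
    using assms D by (cases d) (simp_all add: power_divide power_mult_distrib power2_eq_square field_simps)
  also have "\<dots> \<le> d * (C / (1 + (1 + c) * u)) ^ d * (u ^ (d - 1) / (1 + u))"
    using assms N D ND C by (intro mult_mono mult_left_mono power_mono divide_left_mono) auto
  also have "\<dots> = d * C ^ d * (u ^ (d - 1) / ((1 + u) * (1 + (1 + c) * u) ^ d))"
    by (simp add: power_divide)
  also have "\<dots> \<le> d * C ^ d * (b ^ (d - 1) / ((1 + b) * (1 + (1 + c) * b) ^ d))"
    using assms c by (intro mult_left_mono power_ratio_mono) (auto simp: C_def)
  also have "\<dots> = d * b ^ (d - 1) * C ^ d / ((1 + b) * (1 + b + b * c) ^ d)"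
    by (simp add: algebra_simps)
  finally have "deriv (\<lambda>t. psi d t v w) u \<le> d * b ^ (d - 1) * C ^ d / ((1 + b) * (1 + b + b * c) ^ d)" .
  moreover have "0 \<le> deriv (\<lambda>t. psi d t v w) u"
    using assms by (simp add: deriv_psi_fst[OF Dnz] psi_root_nonneg)
  ultimately show ?thesis
    by (simp add: C_def)
qed

lemma abs_deriv_psi_snd_le:
  fixes d :: nat and u v w b c :: real
  assumes "0 \<le> u" "u \<le> b" "0 \<le> v" "0 \<le> w" "w \<le> c"
  shows "\<bar>deriv (\<lambda>t. psi d u t w) v\<bar> \<le> \<bar>deriv (\<lambda>t. psi d t v w) u\<bar> * (b * (1 + c + b * c))"
proof -
  have D: "0 < 1 + u + u * v" and N: "1 \<le> 1 + v + v * w"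
    using assms by (simp_all add: add_pos_nonneg)
  then have N0: "0 < 1 + v + v * w"
    by linarith
  define r where "r = u * (1 + w + u * w) / (1 + v + v * w)"
  have r: "0 \<le> r"
    using assms N0 by (simp add: r_def)
  have "deriv (\<lambda>t. psi d u t w) v = deriv (\<lambda>t. psi d t v w) u * r"
    using D N0 by (simp add: deriv_psi_fst deriv_psi_snd r_def)
  then have "\<bar>deriv (\<lambda>t. psi d u t w) v\<bar> = \<bar>deriv (\<lambda>t. psi d t v w) u\<bar> * r"
    using r by (simp add: abs_mult)
  also have "\<dots> \<le> \<bar>deriv (\<lambda>t. psi d t v w) u\<bar> * (b * (1 + c + b * c))"
  proof (rule mult_left_mono)
    have "r \<le> u * (1 + w + u * w) / 1"
      unfolding r_def using assms N N0 by (intro divide_left_mono) auto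
    also have "\<dots> \<le> b * (1 + c + b * c)"
      using assms by (simp, intro mult_mono add_mono) auto
    finally show "r \<le> b * (1 + c + b * c)" .
  qed simp
  finally show ?thesis .
qed

lemma abs_deriv_psi_thd_le:
  fixes d :: nat and u v w b c :: real
  assumes "0 \<le> u" "u \<le> b" "0 \<le> v" "v \<le> c" "0 \<le> w" "w \<le> c"
  shows "\<bar>deriv (\<lambda>t. psi d u v t) w\<bar>
    \<le> d * b ^ d * c * (1 + c + c^2) ^ (d - 1) / (1 + b + b * c) ^ d"
proof -
  have D: "0 < 1 + u + u * v" and E: "0 < 1 + b + b * c"
    using assms by (simp_all add: add_pos_nonneg)
  have uv: "u * v / (1 + u + u * v) \<le> b * c / (1 + b + b * c)"
  proof -
    have "u * v \<le> b * c" "u * b * v \<le> u * b * c"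
      using assms by (auto intro: mult_mono mult_left_mono)
    then have "u * v * (1 + b + b * c) \<le> b * c * (1 + u + u * v)"
      by (simp add: algebra_simps)
    then show ?thesis
      using D E by (simp add: field_simps)
  qed
  have "\<bar>deriv (\<lambda>t. psi d u v t) w\<bar> = d * psi_root u v w ^ (d - 1) * (u * v / (1 + u + u * v))"
    using assms D by (simp add: deriv_psi_thd psi_root_nonneg)
  also have "\<dots> \<le> d * (b * (1 + c + c^2) / (1 + b + b * c)) ^ (d - 1) * (b * c / (1 + b + b * c))"
    using assms uv by (intro mult_mono mult_left_mono power_mono psi_root_le psi_root_nonneg) auto
  also have "\<dots> = d * b ^ d * c * (1 + c + c^2) ^ (d - 1) / (1 + b + b * c) ^ d"
  proof -
    have scale: "d * (b * C / E) ^ (d - 1) * (b * c / E) = d * b ^ d * c * C ^ (d - 1) / E ^ d"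
      if "0 < E" for C E :: real
      using that by (cases d) (simp_all add: power_divide power_mult_distrib mult_ac)
    show ?thesis
      by (rule scale[OF E])
  qed
  finally show ?thesis .
qed

lemma params_bounds:
  assumes "2 \<le> d" "d \<le> 7" "params d = (a, b, c)"
  shows "0 \<le> a \<and> c \<le> b"
proof -
  have "d = 2 \<or> d = 3 \<or> d = 4 \<or> d = 5 \<or> d = 6 \<or> d = 7"
    using assms by linarith
  then show ?thesis
    using assms(3) by (elim disjE) (simp_all add: params_def)
qed

lemma params_slope_nonneg:
  assumes "3 \<le> d" "d \<le> 7" "params d = (a, b, c)"
  shows "0 \<le> real d - 1 + (real d - 2 - (1 + c)) * b - 2 * (1 + c) * b^2"
proof -
  have bc: "b = fst (snd (params d))" "c = snd (snd (params d))"
    using assms(3) by simp_all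
  have "d = 3 \<or> d = 4 \<or> d = 5 \<or> d = 6 \<or> d = 7"
    using assms by linarith
  then show ?thesis
    unfolding bc by (elim disjE) (simp_all add: params_def power2_eq_square)
qed

lemma SS_entry_bounds:
  assumes "x \<in> SS a b c" "0 \<le> a" "c \<le> b" "1 \<le> i"
  shows "0 \<le> x i \<and> x i \<le> b \<and> (2 \<le> i \<longrightarrow> x i \<le> c)"
proof (cases "i = 1")
  case True
  then show ?thesis
    using assms by (auto simp: SS_def)
next
  case False
  then have "2 \<le> i"
    using assms(4) by simp
  then show ?thesis
    using assms by (auto simp: SS_def)
qed

theorem lemma2p12:
  fixes d :: nat and a b c :: real and x :: "nat \<Rightarrow> real"
  assumes "2 \<le> d" "d \<le> 7"
    and "params d = (a, b, c)"
    and "x \<in> SS a b c"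
  shows "\<forall>n\<ge>2.
     (d = 2 \<longrightarrow>
        \<bar>deriv (\<lambda>t. psi d t (x n) (x (n+1))) (x (n-1))\<bar>
          \<le> 4 * d * (d - 1) ^ (d - 1) * (1 + c + c^2) ^ d
             / ((d + 1) ^ (d + 1) * (1 + c) ^ (d - 1))) \<and>
     (3 \<le> d \<longrightarrow>
        \<bar>deriv (\<lambda>t. psi d t (x n) (x (n+1))) (x (n-1))\<bar>
          \<le> d * b ^ (d - 1) * (1 + c + c^2) ^ d / ((1 + b) * (1 + b + b * c) ^ d)) \<and>
     \<bar>deriv (\<lambda>t. psi d (x (n-1)) t (x (n+1))) (x n)\<bar>
        \<le> \<bar>deriv (\<lambda>t. psi d t (x n) (x (n+1))) (x (n-1))\<bar> * (b * (1 + c + b * c)) \<and>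
     \<bar>deriv (\<lambda>t. psi d (x (n-1)) (x n) t) (x (n+1))\<bar>
        \<le> d * b ^ d * c * (1 + c + c^2) ^ (d - 1) / (1 + b + b * c) ^ d"
proof -
  have par: "0 \<le> a" "c \<le> b"
    using params_bounds[OF assms(1-3)] by simp_all
  have box: "0 \<le> x (n - 1)" "x (n - 1) \<le> b" "0 \<le> x n" "x n \<le> c" "0 \<le> x (n + 1)" "x (n + 1) \<le> c"
    if "2 \<le> n" for n
    using that SS_entry_bounds[OF assms(4) par, of "n - 1"] SS_entry_bounds[OF assms(4) par, of n]
      SS_entry_bounds[OF assms(4) par, of "n + 1"]
    by auto
  have slope: "3 \<le> d \<Longrightarrow> 0 \<le> real d - 1 + (real d - 2 - (1 + c)) * b - 2 * (1 + c) * b^2"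
    using params_slope_nonneg assms(2,3) by blast
  show ?thesis
    by (intro allI impI conjI abs_deriv_psi_fst_le_uniform abs_deriv_psi_fst_le_monotone
        abs_deriv_psi_snd_le abs_deriv_psi_thd_le) (use assms(1) slope box in auto)
qed

end
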